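(* Let $F$ be a finite field of characteristic $3$. Let $k\ge 0$ be an integer, $m=3k+1$, and $t$ an integer with $t^3\equiv 1\pmod m$ and $\gcd(m,t-1)=1$. Let $G=T_{3m}=\langle x,y\mid x^m=y^3=1,\ y^{-1}xy=x^t\rangle$ (of order $3m$) and $FG$ its group algebra. Let $s\in FG$ be the sum of all elements of $G$ whose order is a power of $3$ (including the identity). Then $J(FG)=\{\alpha\in FG\mid \alpha s=s\alpha=0\}$.
   Context: $J(FG)$ denotes the Jacobson radical of $FG$. *)

theory Defs
  imports "HOL-Algebra.Algebra"
begin

text \<open>The group T_{3m} = <x,y | x^m = y^3 = 1, y^-1 x y = x^t>, realised concretely:
  the pair (a,b) with 0 \<le> a < m, 0 \<le> b < 3 stands for x^a y^b.  From y^-1 x y = x^t and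
  t^3 = 1 (mod m) one gets y x y^-1 = x^(t^2), hence
  (x^a y^b)(x^c y^d) = x^(a + c t^(2b)) y^(b+d).\<close>

definition T_grp :: "int \<Rightarrow> int \<Rightarrow> (int \<times> int) monoid" where
  "T_grp m t = \<lparr> carrier = {0..<m} \<times> {0..<3},
     monoid.mult = (\<lambda>(a,b) (c,d). ((a + c * t ^ (2 * nat b)) mod m, (b + d) mod 3)),
     monoid.one = (0, 0) \<rparr>"

definition group_algebra :: "('g, 'm) monoid_scheme \<Rightarrow> ('g \<Rightarrow> 'a::field) ring" where
  "group_algebra G = \<lparr> carrier = {f. \<forall>g. g \<notin> carrier G \<longrightarrow> f g = 0},
     monoid.mult = (\<lambda>f h g. if g \<in> carrier G
                      then (\<Sum>p\<in>carrier G. f p * h (inv\<^bsub>G\<^esub> p \<otimes>\<^bsub>G\<^esub> g)) else 0),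
     monoid.one = (\<lambda>g. if g = \<one>\<^bsub>G\<^esub> then 1 else 0),
     ring.zero = (\<lambda>g. 0),
     ring.add = (\<lambda>f h g. f g + h g) \<rparr>"

definition left_ideal :: "('b, 'm) ring_scheme \<Rightarrow> 'b set \<Rightarrow> bool" where
  "left_ideal R I \<longleftrightarrow> additive_subgroup I R \<and>
     (\<forall>r\<in>carrier R. \<forall>a\<in>I. r \<otimes>\<^bsub>R\<^esub> a \<in> I)"

definition maximal_left_ideal :: "('b, 'm) ring_scheme \<Rightarrow> 'b set \<Rightarrow> bool" where
  "maximal_left_ideal R I \<longleftrightarrow> left_ideal R I \<and> I \<noteq> carrier R \<and>
     (\<forall>J. left_ideal R J \<and> I \<subseteq> J \<and> J \<noteq> carrier R \<longrightarrow> J = I)"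

definition jacobson_radical :: "('b, 'm) ring_scheme \<Rightarrow> 'b set" where
  "jacobson_radical R = carrier R \<inter> \<Inter> {I. maximal_left_ideal R I}"

end

theory Submission
  imports Defs
begin

text \<open>
  Let S be the set of 3-elements of G; in T_3m these are the solutions of g^3 = 1, and S is
  stable under conjugation, inversion and cubing. In characteristic 3 the functional
  z |-> (sum of z over S) commutes with cubing: written as a sum over the triples (x, y, w) with
  x y w in S, the rotation (x, y, w) |-> (y, w, x) preserves the summand of the cube of z and
  fixes only the diagonal, so the free orbits contribute multiples of 3 and only
  (sum of z(x)^3 over S) = (sum of z over S)^3 survives. Elements of the Jacobson radical of a
  finite ring are nilpotent, so the functional vanishes on J(FG); evaluated on the left
  translates of some alpha in J(FG) this says alpha s = s alpha = 0.

  Conversely, S consists of 1 and all elements outside the normal subgroup generated by x, so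
  beta s = 0 forces beta to be constant on the cosets of that subgroup, with coset values
  summing to 0. Such elements multiply like elements of the augmentation ideal of F C_3 (each
  coset has m = 1 mod 3 elements), whose cube is 0 in characteristic 3. Hence if alpha s = 0,
  every r alpha is nilpotent, and alpha lies in every maximal left ideal.
\<close>

section \<open>The group algebra\<close>

lemma carrier_group_algebra: "carrier (group_algebra G) = {f. \<forall>g. g \<notin> carrier G \<longrightarrow> f g = 0}"
  by (simp add: group_algebra_def)

lemma mult_group_algebra:
  "f \<otimes>\<^bsub>group_algebra G\<^esub> h = (\<lambda>g. if g \<in> carrier G
     then (\<Sum>p\<in>carrier G. f p * h (inv\<^bsub>G\<^esub> p \<otimes>\<^bsub>G\<^esub> g)) else 0)"
  by (simp add: group_algebra_def)

lemma one_group_algebra: "\<one>\<^bsub>group_algebra G\<^esub> = (\<lambda>g. if g = \<one>\<^bsub>G\<^esub> then 1 else 0)"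
  by (simp add: group_algebra_def)

lemma zero_group_algebra: "\<zero>\<^bsub>group_algebra G\<^esub> = (\<lambda>g. 0)"
  by (simp add: group_algebra_def)

lemma add_group_algebra: "f \<oplus>\<^bsub>group_algebra G\<^esub> h = (\<lambda>g. f g + h g)"
  by (simp add: group_algebra_def)

lemma mult_group_algebra_eq_zeroI:
  "(\<And>g. g \<in> carrier G \<Longrightarrow> (f \<otimes>\<^bsub>group_algebra G\<^esub> h) g = 0) \<Longrightarrow>
    f \<otimes>\<^bsub>group_algebra G\<^esub> h = \<zero>\<^bsub>group_algebra G\<^esub>"
  by (auto simp: zero_group_algebra fun_eq_iff) (simp add: mult_group_algebra)

lemma finite_carrier_group_algebra:
  assumes "finite (carrier G)"
  shows "finite (carrier (group_algebra G :: ('g \<Rightarrow> 'a::{finite,field}) ring))"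
proof -
  have "carrier (group_algebra G :: ('g \<Rightarrow> 'a) ring)
      = {f. \<forall>x. (x \<in> carrier G \<longrightarrow> f x \<in> UNIV) \<and> (x \<notin> carrier G \<longrightarrow> f x = 0)}"
    by (auto simp: carrier_group_algebra)
  then show ?thesis using finite_set_of_finite_funs[OF assms finite_UNIV] by simp
qed

context group
begin

lemma inv_mult_cancel_left [simp]: "x \<in> carrier G \<Longrightarrow> y \<in> carrier G \<Longrightarrow> inv x \<otimes> (x \<otimes> y) = y"
  by (simp flip: m_assoc)

lemma mult_inv_cancel_left [simp]: "x \<in> carrier G \<Longrightarrow> y \<in> carrier G \<Longrightarrow> x \<otimes> (inv x \<otimes> y) = y"
  by (simp flip: m_assoc)

lemma convolution_assoc:
  fixes f h k :: "'a \<Rightarrow> 'c::comm_semiring_1"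
  assumes "finite (carrier G)" "g \<in> carrier G"
  shows "(\<Sum>p\<in>carrier G. (\<Sum>q\<in>carrier G. f q * h (inv q \<otimes> p)) * k (inv p \<otimes> g))
       = (\<Sum>q\<in>carrier G. f q * (\<Sum>r\<in>carrier G. h r * k (inv r \<otimes> (inv q \<otimes> g))))"
proof -
  have "(\<Sum>p\<in>carrier G. f q * (h (inv q \<otimes> p) * k (inv p \<otimes> g)))
      = f q * (\<Sum>r\<in>carrier G. h r * k (inv r \<otimes> (inv q \<otimes> g)))" if q: "q \<in> carrier G" for q
  proof -
    have "(\<Sum>p\<in>carrier G. f q * (h (inv q \<otimes> p) * k (inv p \<otimes> g)))
        = (\<Sum>r\<in>carrier G. f q * (h (inv q \<otimes> (q \<otimes> r)) * k (inv (q \<otimes> r) \<otimes> g)))"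
      using q by (intro sum.reindex_bij_betw[symmetric]) (simp add: bij_betw_def inj_on_cmult surj_const_mult)
    also have "\<dots> = f q * (\<Sum>r\<in>carrier G. h r * k (inv r \<otimes> (inv q \<otimes> g)))"
      using q assms(2) by (simp add: sum_distrib_left inv_mult_group m_assoc)
    finally show ?thesis .
  qed
  then show ?thesis
    by (simp add: sum_distrib_right mult.assoc sum.swap[of _ "carrier G" "carrier G"] cong: sum.cong)
qed

lemma abelian_group_group_algebra: "abelian_group (group_algebra G :: ('a \<Rightarrow> 'c::field) ring)"
proof (rule abelian_groupI)
  fix x assume "x \<in> carrier (group_algebra G :: ('a \<Rightarrow> 'c) ring)"
  then show "\<exists>y\<in>carrier (group_algebra G). y \<oplus>\<^bsub>group_algebra G\<^esub> x = \<zero>\<^bsub>group_algebra G\<^esub>"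
    by (intro bexI[of _ "\<lambda>g. - x g"]) (auto simp: carrier_group_algebra add_group_algebra zero_group_algebra)
qed (auto simp: carrier_group_algebra add_group_algebra zero_group_algebra add.assoc add.commute)

lemma monoid_group_algebra:
  assumes fin: "finite (carrier G)"
  shows "monoid (group_algebra G :: ('a \<Rightarrow> 'c::field) ring)"
proof (rule monoidI)
  fix x y z :: "'a \<Rightarrow> 'c"
  show "x \<otimes>\<^bsub>group_algebra G\<^esub> y \<otimes>\<^bsub>group_algebra G\<^esub> z = x \<otimes>\<^bsub>group_algebra G\<^esub> (y \<otimes>\<^bsub>group_algebra G\<^esub> z)"
  proof
    fix g
    show "(x \<otimes>\<^bsub>group_algebra G\<^esub> y \<otimes>\<^bsub>group_algebra G\<^esub> z) g = (x \<otimes>\<^bsub>group_algebra G\<^esub> (y \<otimes>\<^bsub>group_algebra G\<^esub> z)) g"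
      using convolution_assoc[OF fin, of g x y z]
      by (cases "g \<in> carrier G") (simp_all add: mult_group_algebra cong: sum.cong_simp)
  qed
next
  fix x :: "'a \<Rightarrow> 'c" assume x: "x \<in> carrier (group_algebra G)"
  have "(\<Sum>p\<in>carrier G. (if p = \<one> then 1 else 0) * x (inv p \<otimes> g)) = x g"
    "(\<Sum>p\<in>carrier G. x p * (if inv p \<otimes> g = \<one> then 1 else 0)) = x g"
    if "g \<in> carrier G" for g
    using that fin inv_solve_left'[OF one_closed _ that]
    by (simp_all add: if_distrib[of "\<lambda>c. c * _"] if_distrib[of "\<lambda>c. _ * c"] cong: if_cong)
  then show "\<one>\<^bsub>group_algebra G\<^esub> \<otimes>\<^bsub>group_algebra G\<^esub> x = x" "x \<otimes>\<^bsub>group_algebra G\<^esub> \<one>\<^bsub>group_algebra G\<^esub> = x"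
    using x by (auto simp: carrier_group_algebra mult_group_algebra one_group_algebra)
qed (simp_all add: carrier_group_algebra mult_group_algebra one_group_algebra)

lemma ring_group_algebra:
  assumes "finite (carrier G)"
  shows "ring (group_algebra G :: ('a \<Rightarrow> 'c::field) ring)"
  by (rule ringI[OF abelian_group_group_algebra monoid_group_algebra[OF assms]])
    (auto simp: mult_group_algebra add_group_algebra sum.distrib distrib_left distrib_right)

lemma delta_mult_group_algebra:
  assumes "finite (carrier G)" "h \<in> carrier G" "g \<in> carrier G"
  shows "((\<lambda>x. if x = h then 1 else 0) \<otimes>\<^bsub>group_algebra G\<^esub> \<alpha>) g = (\<alpha> (inv h \<otimes> g) :: 'c::field)"
  using assms by (simp add: mult_group_algebra if_distrib[of "\<lambda>c. c * _"] cong: if_cong)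

lemma mult_mult_group_algebra_apply:
  fixes f h k :: "'a \<Rightarrow> 'c::field"
  assumes "finite (carrier G)" "g \<in> carrier G"
  shows "(f \<otimes>\<^bsub>group_algebra G\<^esub> h \<otimes>\<^bsub>group_algebra G\<^esub> k) g
       = (\<Sum>x\<in>carrier G. \<Sum>y\<in>carrier G. f x * h y * k (inv y \<otimes> (inv x \<otimes> g)))"
  using assms convolution_assoc[OF assms, of f h k]
  by (simp add: mult_group_algebra sum_distrib_left mult.assoc cong: sum.cong_simp)

lemma sum_mult_mult_group_algebra:
  fixes f h k :: "'a \<Rightarrow> 'c::field"
  assumes fin: "finite (carrier G)" and S: "S \<subseteq> carrier G"
  shows "(\<Sum>a\<in>S. (f \<otimes>\<^bsub>group_algebra G\<^esub> h \<otimes>\<^bsub>group_algebra G\<^esub> k) a)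
       = (\<Sum>x\<in>carrier G. \<Sum>y\<in>carrier G. \<Sum>w\<in>carrier G.
            if x \<otimes> y \<otimes> w \<in> S then f x * h y * k w else 0)"
proof -
  let ?F = "\<lambda>a. (f \<otimes>\<^bsub>group_algebra G\<^esub> h \<otimes>\<^bsub>group_algebra G\<^esub> k) a"
  have "(\<Sum>a\<in>S. ?F a) = (\<Sum>a\<in>carrier G. if a \<in> S then ?F a else 0)"
    using fin S by (simp add: sum.inter_restrict[symmetric] Int_absorb1)
  also have "\<dots> = (\<Sum>a\<in>carrier G. \<Sum>x\<in>carrier G. \<Sum>y\<in>carrier G.
           if a \<in> S then f x * h y * k (inv y \<otimes> (inv x \<otimes> a)) else 0)"
    using fin by (intro sum.cong refl) (simp add: mult_mult_group_algebra_apply)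
  also have "\<dots> = (\<Sum>x\<in>carrier G. \<Sum>a\<in>carrier G. \<Sum>y\<in>carrier G.
           if a \<in> S then f x * h y * k (inv y \<otimes> (inv x \<otimes> a)) else 0)"
    by (rule sum.swap)
  also have "\<dots> = (\<Sum>x\<in>carrier G. \<Sum>y\<in>carrier G. \<Sum>a\<in>carrier G.
           if a \<in> S then f x * h y * k (inv y \<otimes> (inv x \<otimes> a)) else 0)"
    by (intro sum.cong refl sum.swap)
  also have "\<dots> = (\<Sum>x\<in>carrier G. \<Sum>y\<in>carrier G. \<Sum>w\<in>carrier G.
            if x \<otimes> y \<otimes> w \<in> S then f x * h y * k w else 0)"
  proof -
    have "(\<Sum>a\<in>carrier G. if a \<in> S then f x * h y * k (inv y \<otimes> (inv x \<otimes> a)) else 0)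
        = (\<Sum>w\<in>carrier G. if x \<otimes> y \<otimes> w \<in> S then f x * h y * k w else 0)"
      if "x \<in> carrier G" "y \<in> carrier G" for x y
      by (rule sum.reindex_bij_witness[where i = "\<lambda>w. x \<otimes> y \<otimes> w"
            and j = "\<lambda>a. inv y \<otimes> (inv x \<otimes> a)"]) (use that in \<open>auto simp: m_assoc\<close>)
    then show ?thesis by (simp cong: sum.cong_simp)
  qed
  finally show ?thesis .
qed

end

section \<open>Left ideals and the Jacobson radical of a finite ring\<close>

lemma left_ideal_subset: "left_ideal R I \<Longrightarrow> I \<subseteq> carrier R"
  unfolding left_ideal_def by (elim conjE) (rule additive_subgroup.a_subset)

lemma left_ideal_add_closed: "left_ideal R I \<Longrightarrow> a \<in> I \<Longrightarrow> b \<in> I \<Longrightarrow> a \<oplus>\<^bsub>R\<^esub> b \<in> I"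
  unfolding left_ideal_def by (elim conjE) (rule additive_subgroup.a_closed)

lemma left_ideal_zero_closed: "left_ideal R I \<Longrightarrow> \<zero>\<^bsub>R\<^esub> \<in> I"
  unfolding left_ideal_def by (elim conjE) (rule additive_subgroup.zero_closed)

lemma left_ideal_mult_closed: "left_ideal R I \<Longrightarrow> r \<in> carrier R \<Longrightarrow> a \<in> I \<Longrightarrow> r \<otimes>\<^bsub>R\<^esub> a \<in> I"
  unfolding left_ideal_def by blast

lemma jacobson_radical_carrier: "x \<in> jacobson_radical R \<Longrightarrow> x \<in> carrier R"
  unfolding jacobson_radical_def by blast

lemma maximal_left_ideal_imp_left_ideal: "maximal_left_ideal R M \<Longrightarrow> left_ideal R M"
  unfolding maximal_left_ideal_def by blast

lemma (in monoid) exists_nat_pow_repeat: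
  assumes "finite (carrier G)" "x \<in> carrier G"
  obtains i d :: nat where "d > 0" "x [^] (d + i) = x [^] i"
proof -
  have "finite (range (\<lambda>n::nat. x [^] n))"
    using assms by (auto intro: finite_subset)
  then obtain i :: nat where "infinite {n::nat. x [^] n = x [^] i}"
    using pigeonhole_infinite[of "UNIV :: nat set" "\<lambda>n. x [^] n"] by auto
  then obtain j where "j > i" "x [^] j = x [^] i"
    unfolding infinite_nat_iff_unbounded by blast
  then have "j - i > 0" "x [^] (j - i + i) = x [^] i" by simp_all
  then show ?thesis by (rule that)
qed

context ring
begin

lemma left_idealI:
  assumes "I \<subseteq> carrier R" "\<zero> \<in> I" "\<And>a b. a \<in> I \<Longrightarrow> b \<in> I \<Longrightarrow> a \<oplus> b \<in> I"
    and "\<And>r a. r \<in> carrier R \<Longrightarrow> a \<in> I \<Longrightarrow> r \<otimes> a \<in> I"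
  shows "left_ideal R I"
proof -
  have "\<ominus> a \<in> I" if "a \<in> I" for a
  proof -
    have "\<ominus> a = (\<ominus> \<one>) \<otimes> a" using that assms(1) by (auto simp: l_minus)
    then show ?thesis using assms(4)[of "\<ominus> \<one>" a] that by simp
  qed
  then have "subgroup I (add_monoid R)"
    using assms(1-3) by (intro add.subgroupI) auto
  then show ?thesis
    unfolding left_ideal_def using assms(4) by (intro conjI additive_subgroupI) auto
qed

lemma left_ideal_zero: "left_ideal R {\<zero>}"
  by (rule left_idealI) auto

lemma left_ideal_add_left_multiples:
  assumes "left_ideal R M" "x \<in> carrier R"
  shows "left_ideal R {m \<oplus> r \<otimes> x | m r. m \<in> M \<and> r \<in> carrier R}"
proof (rule left_idealI)
  have M: "M \<subseteq> carrier R" "\<zero> \<in> M"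
    using assms(1) by (simp_all add: left_ideal_subset left_ideal_zero_closed)
  then show "{m \<oplus> r \<otimes> x | m r. m \<in> M \<and> r \<in> carrier R} \<subseteq> carrier R"
    using assms(2) by auto
  show "\<zero> \<in> {m \<oplus> r \<otimes> x | m r. m \<in> M \<and> r \<in> carrier R}"
    using M assms(2) by (auto intro!: exI[of _ \<zero>])
next
  fix a b assume "a \<in> {m \<oplus> r \<otimes> x | m r. m \<in> M \<and> r \<in> carrier R}"
    "b \<in> {m \<oplus> r \<otimes> x | m r. m \<in> M \<and> r \<in> carrier R}"
  then obtain m r m' r' where ab: "a = m \<oplus> r \<otimes> x" "b = m' \<oplus> r' \<otimes> x"
    and "m \<in> M" "m' \<in> M" "r \<in> carrier R" "r' \<in> carrier R" by blast
  moreover have "m \<in> carrier R" "m' \<in> carrier R"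
    using calculation left_ideal_subset[OF assms(1)] by auto
  ultimately have "a \<oplus> b = (m \<oplus> m') \<oplus> (r \<oplus> r') \<otimes> x"
    using assms(2) by (simp add: l_distr a_ac)
  with \<open>m \<in> M\<close> \<open>m' \<in> M\<close> \<open>r \<in> carrier R\<close> \<open>r' \<in> carrier R\<close>
  show "a \<oplus> b \<in> {m \<oplus> r \<otimes> x | m r. m \<in> M \<and> r \<in> carrier R}"
    using left_ideal_add_closed[OF assms(1)] by blast
next
  fix s a assume s: "s \<in> carrier R" and "a \<in> {m \<oplus> r \<otimes> x | m r. m \<in> M \<and> r \<in> carrier R}"
  then obtain m r where "a = m \<oplus> r \<otimes> x" "m \<in> M" "r \<in> carrier R" by blast
  moreover have "m \<in> carrier R" using calculation left_ideal_subset[OF assms(1)] by auto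
  ultimately have "s \<otimes> a = s \<otimes> m \<oplus> (s \<otimes> r) \<otimes> x"
    using s assms(2) by (simp add: r_distr m_assoc)
  with \<open>m \<in> M\<close> \<open>r \<in> carrier R\<close> show "s \<otimes> a \<in> {m \<oplus> r \<otimes> x | m r. m \<in> M \<and> r \<in> carrier R}"
    using left_ideal_mult_closed[OF assms(1) s] s by blast
qed

lemma left_ideal_one_imp_carrier:
  assumes "left_ideal R I" "\<one> \<in> I"
  shows "I = carrier R"
proof -
  have "r \<in> I" if "r \<in> carrier R" for r
    using left_ideal_mult_closed[OF assms(1) that assms(2)] that by simp
  then show ?thesis using left_ideal_subset[OF assms(1)] by blast
qed

lemma maximal_left_ideal_one_decomp:
  assumes M: "maximal_left_ideal R M" and x: "x \<in> carrier R" "x \<notin> M"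
  obtains m r where "m \<in> M" "r \<in> carrier R" "\<one> = m \<oplus> r \<otimes> x"
proof -
  let ?M' = "{m \<oplus> r \<otimes> x | m r. m \<in> M \<and> r \<in> carrier R}"
  have I: "left_ideal R M" using M by (rule maximal_left_ideal_imp_left_ideal)
  have I': "left_ideal R ?M'" using I x(1) by (rule left_ideal_add_left_multiples)
  have sub: "M \<subseteq> ?M'"
  proof
    fix m assume "m \<in> M"
    moreover have "m = m \<oplus> \<zero> \<otimes> x" using \<open>m \<in> M\<close> x(1) left_ideal_subset[OF I] by auto
    ultimately show "m \<in> ?M'" by blast
  qed
  have "x \<in> ?M'"
  proof -
    have "x = \<zero> \<oplus> \<one> \<otimes> x \<and> \<zero> \<in> M \<and> \<one> \<in> carrier R"
      using x(1) left_ideal_zero_closed[OF I] by simp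
    then show ?thesis by blast
  qed
  have "?M' = carrier R"
  proof (rule ccontr)
    assume "?M' \<noteq> carrier R"
    with M I' sub have "?M' = M" unfolding maximal_left_ideal_def by blast
    with \<open>x \<in> ?M'\<close> x(2) show False by simp
  qed
  then have "\<one> \<in> ?M'" by simp
  then obtain m r where "m \<in> M" "r \<in> carrier R" "\<one> = m \<oplus> r \<otimes> x" by blast
  then show ?thesis by (rule that)
qed

lemma exists_maximal_left_ideal:
  assumes "finite (carrier R)" "left_ideal R L" "L \<noteq> carrier R"
  obtains M where "maximal_left_ideal R M" "L \<subseteq> M"
proof -
  define S where "S = {I. left_ideal R I \<and> L \<subseteq> I \<and> I \<noteq> carrier R}"
  have "S \<subseteq> Pow (carrier R)" unfolding S_def using left_ideal_subset by blast
  then have "finite S" using assms(1) by (rule finite_subset[OF _ finite_Pow_iff[THEN iffD2]])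
  moreover have "L \<in> S" using assms unfolding S_def by simp
  ultimately obtain M where M: "M \<in> S" "\<forall>I\<in>S. M \<subseteq> I \<longrightarrow> M = I"
    using finite_has_maximal[of S] by blast
  have "maximal_left_ideal R M"
    unfolding maximal_left_ideal_def
  proof (intro conjI allI impI)
    fix J assume "left_ideal R J \<and> M \<subseteq> J \<and> J \<noteq> carrier R"
    moreover from this have "J \<in> S" using M(1) unfolding S_def by auto
    ultimately show "J = M" using M(2) by blast
  qed (use M(1) in \<open>simp_all add: S_def\<close>)
  then show ?thesis using M(1) that unfolding S_def by blast
qed

lemma jacobson_radical_maximal_left_ideal:
  "x \<in> jacobson_radical R \<Longrightarrow> maximal_left_ideal R M \<Longrightarrow> x \<in> M"
  unfolding jacobson_radical_def by blast

lemma jacobson_radical_mult_left: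
  assumes "x \<in> jacobson_radical R" "r \<in> carrier R"
  shows "r \<otimes> x \<in> jacobson_radical R"
proof -
  have "r \<otimes> x \<in> M" if "maximal_left_ideal R M" for M
    using left_ideal_mult_closed[OF maximal_left_ideal_imp_left_ideal[OF that] assms(2)]
      jacobson_radical_maximal_left_ideal[OF assms(1) that] .
  then show ?thesis
    using assms jacobson_radical_carrier unfolding jacobson_radical_def by simp
qed

lemma jacobson_radical_one_minus_left_invertible:
  assumes fin: "finite (carrier R)" and x: "x \<in> jacobson_radical R"
  obtains a where "a \<in> carrier R" "a \<otimes> (\<one> \<ominus> x) = \<one>"
proof -
  have xc: "x \<in> carrier R" using x by (rule jacobson_radical_carrier)
  define y where "y = \<one> \<ominus> x"
  have yc: "y \<in> carrier R" unfolding y_def using xc by simp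
  let ?L = "{m \<oplus> r \<otimes> y | m r. m \<in> {\<zero>} \<and> r \<in> carrier R}"
  have L: "left_ideal R ?L" using left_ideal_zero yc by (rule left_ideal_add_left_multiples)
  show ?thesis
  proof (cases "?L = carrier R")
    case True
    then have "\<one> \<in> ?L" by simp
    then show ?thesis using that yc unfolding y_def by auto
  next
    case False
    then obtain M where M: "maximal_left_ideal R M" "?L \<subseteq> M"
      using exists_maximal_left_ideal[OF fin L] by blast
    have I: "left_ideal R M" using M(1) by (rule maximal_left_ideal_imp_left_ideal)
    have "y = \<zero> \<oplus> \<one> \<otimes> y \<and> \<one> \<in> carrier R" using yc by simp
    then have "y \<in> M" using M(2) by blast
    moreover have "x \<in> M" using x M(1) by (rule jacobson_radical_maximal_left_ideal)
    ultimately have "y \<oplus> x \<in> M" by (rule left_ideal_add_closed[OF I])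
    moreover have "y \<oplus> x = \<one>" unfolding y_def using xc by (simp add: minus_eq a_assoc l_neg)
    ultimately have "M = carrier R" using I by (simp add: left_ideal_one_imp_carrier)
    then show ?thesis using M(1) unfolding maximal_left_ideal_def by blast
  qed
qed

lemma jacobson_radical_nilpotent:
  assumes fin: "finite (carrier R)" and x: "x \<in> jacobson_radical R"
  obtains n :: nat where "x [^] n = \<zero>"
proof -
  have xc: "x \<in> carrier R" using x by (rule jacobson_radical_carrier)
  obtain i d :: nat where d: "d > 0" "x [^] (d + i) = x [^] i"
    using fin xc by (rule exists_nat_pow_repeat)
  have "x [^] d = x [^] (d - 1) \<otimes> x" using d(1) by (metis Suc_diff_1 nat_pow_Suc)
  then have y: "x [^] d \<in> jacobson_radical R"
    using jacobson_radical_mult_left[OF x, of "x [^] (d - 1)"] xc by simp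
  obtain a where a: "a \<in> carrier R" "a \<otimes> (\<one> \<ominus> x [^] d) = \<one>"
    using fin y by (rule jacobson_radical_one_minus_left_invertible)
  have "(\<one> \<ominus> x [^] d) \<otimes> x [^] i = \<zero>"
    using xc d(2) by (simp add: l_minus minus_eq l_distr nat_pow_mult r_neg)
  then have "a \<otimes> (\<one> \<ominus> x [^] d) \<otimes> x [^] i = \<zero>" using a(1) xc by (simp add: m_assoc)
  then have "x [^] i = \<zero>" using a(2) xc by simp
  then show ?thesis by (rule that)
qed

lemma one_minus_nilpotent_left_invertible:
  assumes b: "b \<in> carrier R" and nil: "b [^] (n::nat) = \<zero>"
  obtains u where "u \<in> carrier R" "u \<otimes> (\<one> \<ominus> b) = \<one>"
proof -
  have "\<exists>u\<in>carrier R. u \<otimes> (\<one> \<ominus> b) = \<one> \<ominus> b [^] k" for k :: nat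
  proof (induction k)
    case 0
    then show ?case using b by (intro bexI[of _ \<zero>]) (auto simp: minus_eq r_neg)
  next
    case (Suc k)
    then obtain u where u: "u \<in> carrier R" and IH: "u \<otimes> (\<one> \<ominus> b) = \<one> \<ominus> b [^] k" by blast
    have "b \<otimes> (\<one> \<ominus> b) = (\<one> \<ominus> b) \<otimes> b"
      using b by (simp add: l_minus r_minus minus_eq l_distr r_distr)
    then have "u \<otimes> b \<otimes> (\<one> \<ominus> b) = (\<one> \<ominus> b [^] k) \<otimes> b" using b u by (simp add: m_assoc flip: IH)
    also have "\<dots> = b \<ominus> b [^] Suc k" using b by (simp add: l_minus minus_eq l_distr)
    finally have "(\<one> \<oplus> u \<otimes> b) \<otimes> (\<one> \<ominus> b) = \<one> \<ominus> b [^] Suc k"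
      using b u by (simp add: l_distr minus_eq a_assoc r_neg1)
    then show ?case using b u by blast
  qed
  from this[of n] show ?thesis using that nil by (auto simp: minus_eq)
qed

lemma in_jacobson_radicalI:
  assumes x: "x \<in> carrier R" and nil: "\<And>r. r \<in> carrier R \<Longrightarrow> \<exists>n::nat. (r \<otimes> x) [^] n = \<zero>"
  shows "x \<in> jacobson_radical R"
proof -
  have "x \<in> M" if M: "maximal_left_ideal R M" for M
  proof (rule ccontr)
    assume "x \<notin> M"
    with M x obtain m r where m: "m \<in> M" and r: "r \<in> carrier R" and one: "\<one> = m \<oplus> r \<otimes> x"
      by (rule maximal_left_ideal_one_decomp)
    have I: "left_ideal R M" using M by (rule maximal_left_ideal_imp_left_ideal)
    have mc: "m \<in> carrier R" using m left_ideal_subset[OF I] by blast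
    have bc: "r \<otimes> x \<in> carrier R" using r x by simp
    obtain n :: nat where "(r \<otimes> x) [^] n = \<zero>" using nil[OF r] by blast
    with bc obtain u where u: "u \<in> carrier R" "u \<otimes> (\<one> \<ominus> r \<otimes> x) = \<one>"
      by (rule one_minus_nilpotent_left_invertible)
    have "\<one> \<ominus> r \<otimes> x = m" using one mc bc by (simp add: minus_eq a_assoc r_neg)
    then have "\<one> \<in> M" using u left_ideal_mult_closed[OF I u(1) m] by simp
    then show False using M left_ideal_one_imp_carrier[OF I] unfolding maximal_left_ideal_def by blast
  qed
  then show ?thesis unfolding jacobson_radical_def using x by blast
qed

end

section \<open>Cube roots of unity in a group\<close>

definition cube_roots :: "('g, 'm) monoid_scheme \<Rightarrow> 'g set" where
  "cube_roots G = {g \<in> carrier G. g [^]\<^bsub>G\<^esub> (3::nat) = \<one>\<^bsub>G\<^esub>}"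

lemma cube_roots_subset: "cube_roots G \<subseteq> carrier G"
  unfolding cube_roots_def by blast

context group
begin

lemma nat_pow_conj:
  assumes "g \<in> carrier G" "w \<in> carrier G"
  shows "(g \<otimes> w \<otimes> inv g) [^] (n::nat) = g \<otimes> w [^] n \<otimes> inv g"
proof (induction n)
  case 0
  then show ?case using assms by simp
next
  case (Suc n)
  then show ?case using assms by (simp add: m_assoc nat_pow_Suc2 flip: m_assoc[of "inv g" g])
qed

lemma conj_mem_cube_roots_iff:
  assumes "g \<in> carrier G" "w \<in> carrier G"
  shows "g \<otimes> w \<otimes> inv g \<in> cube_roots G \<longleftrightarrow> w \<in> cube_roots G"
proof -
  have "g \<otimes> w [^] (3::nat) \<otimes> inv g = \<one> \<longleftrightarrow> w [^] (3::nat) = \<one>"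
    using assms by (simp add: inv_solve_right')
  then show ?thesis using assms unfolding cube_roots_def by (simp add: nat_pow_conj)
qed

lemma inv_mem_cube_roots_iff:
  assumes "w \<in> carrier G"
  shows "inv w \<in> cube_roots G \<longleftrightarrow> w \<in> cube_roots G"
  using assms unfolding cube_roots_def by (simp add: nat_pow_inv)

lemma cube_mem_cube_roots_iff:
  assumes exp3: "\<And>y. y \<in> carrier G \<Longrightarrow> y [^] (9::nat) = \<one> \<Longrightarrow> y [^] (3::nat) = \<one>"
    and x: "x \<in> carrier G"
  shows "x \<otimes> x \<otimes> x \<in> cube_roots G \<longleftrightarrow> x \<in> cube_roots G"
proof -
  have "x \<otimes> x \<otimes> x = x [^] (3::nat)" using x by (simp add: numeral_3_eq_3)
  moreover have "(x [^] (3::nat)) [^] (3::nat) = x [^] (9::nat)" using x by (simp add: nat_pow_pow)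
  ultimately show ?thesis using exp3[OF x] x unfolding cube_roots_def by auto
qed

lemma ord_eq_power_of_3_iff:
  assumes exp3: "\<And>y. y \<in> carrier G \<Longrightarrow> y [^] (9::nat) = \<one> \<Longrightarrow> y [^] (3::nat) = \<one>"
    and x: "x \<in> carrier G"
  shows "(\<exists>n::nat. ord x = 3 ^ n) \<longleftrightarrow> x \<in> cube_roots G"
proof
  have step: "x [^] ((3::nat) ^ Suc n) = \<one> \<Longrightarrow> x [^] (3::nat) = \<one>" for n
  proof (induction n)
    case (Suc n)
    have "(x [^] ((3::nat) ^ n)) [^] (9::nat) = \<one>"
      using Suc.prems x by (simp add: nat_pow_pow ac_simps)
    then have "x [^] ((3::nat) ^ Suc n) = \<one>"
      using exp3[of "x [^] ((3::nat) ^ n)"] x by (simp add: nat_pow_pow ac_simps)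
    then show ?case by (rule Suc.IH)
  qed simp
  assume "\<exists>n::nat. ord x = 3 ^ n"
  then obtain n :: nat where n: "ord x = 3 ^ n" by blast
  show "x \<in> cube_roots G"
  proof (cases n)
    case 0
    then have "x = \<one>" using n x ord_eq_1 by simp
    then show ?thesis unfolding cube_roots_def by simp
  next
    case (Suc n')
    then have "x [^] ((3::nat) ^ Suc n') = \<one>" using n pow_ord_eq_1[OF x] by simp
    then show ?thesis using step x unfolding cube_roots_def by blast
  qed
next
  assume "x \<in> cube_roots G"
  then have "ord x dvd 3" using x pow_eq_id unfolding cube_roots_def by blast
  moreover have "Factorial_Ring.prime (3::nat)" by simp
  ultimately have "ord x = 1 \<or> ord x = 3" unfolding prime_nat_iff by blast
  then show "\<exists>n::nat. ord x = 3 ^ n" by (metis power_0 power_one_right)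
qed

end

section \<open>Sums over a normal cube-closed subset in characteristic 3\<close>

lemma three_eq_0_if_CHAR_3: "CHAR('a::semiring_1) = 3 \<Longrightarrow> (3::'a) = 0"
  using of_nat_CHAR[where 'a = 'a] by simp

lemma sum_eq_0_if_fixpoint_free_order_3:
  fixes f :: "'b \<Rightarrow> 'a::comm_ring_1"
  assumes "finite D" "(3::'a) = 0"
    and "\<And>u. u \<in> D \<Longrightarrow> \<rho> u \<in> D" "\<And>u. u \<in> D \<Longrightarrow> \<rho> (\<rho> (\<rho> u)) = u"
    and "\<And>u. u \<in> D \<Longrightarrow> \<rho> u \<noteq> u" "\<And>u. u \<in> D \<Longrightarrow> f (\<rho> u) = f u"
  shows "sum f D = 0"
  using assms(1,3-)
proof (induction "card D" arbitrary: D rule: less_induct)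
  case less
  show ?case
  proof (cases "D = {}")
    case False
    then obtain u where u: "u \<in> D" by blast
    define orb where "orb = {u, \<rho> u, \<rho> (\<rho> u)}"
    have orb_sub: "orb \<subseteq> D" unfolding orb_def using u less.prems(2) by auto
    have "\<rho> u \<noteq> u" "\<rho> (\<rho> u) \<noteq> \<rho> u" using less.prems(2,4) u by auto
    moreover have "\<rho> (\<rho> u) \<noteq> u"
    proof
      assume "\<rho> (\<rho> u) = u"
      then have "\<rho> u = u" using less.prems(3)[OF u] by simp
      then show False using less.prems(4)[OF u] by contradiction
    qed
    ultimately have "sum f orb = 3 * f u"
      unfolding orb_def using less.prems(2,5) u by (simp add: algebra_simps)
    then have orb_sum: "sum f orb = 0" using assms(2) by simp
    have "\<rho> v \<in> D - orb" if v: "v \<in> D - orb" for v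
    proof -
      have "\<rho> (\<rho> (\<rho> v)) \<notin> {\<rho> (\<rho> u), \<rho> (\<rho> (\<rho> u)), \<rho> (\<rho> (\<rho> (\<rho> u)))}"
        using v less.prems(3) less.prems(3)[OF u] unfolding orb_def by auto
      then have "\<rho> v \<notin> orb" unfolding orb_def by auto
      then show ?thesis using v less.prems(2) by blast
    qed
    moreover have "card (D - orb) < card D"
      using less.prems(1) u unfolding orb_def by (intro psubset_card_mono) auto
    ultimately have "sum f (D - orb) = 0"
      using less.prems by (intro less.hyps) auto
    with orb_sum show ?thesis using sum.subset_diff[OF orb_sub less.prems(1), of f] by simp
  qed simp
qed

lemma sum_power_3_char_3:
  fixes f :: "'b \<Rightarrow> 'a::comm_ring_1"
  assumes "(3::'a) = 0"
  shows "(\<Sum>x\<in>S. f x) ^ 3 = (\<Sum>x\<in>S. f x ^ 3)"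
proof (induction S rule: infinite_finite_induct)
  case (insert x S)
  have "(a + b) ^ 3 = a ^ 3 + b ^ 3 + 3 * (a * a * b + a * b * b)" for a b :: 'a
    by (simp add: power3_eq_cube algebra_simps numeral_3_eq_3)
  then show ?case using insert assms by simp
qed simp_all

locale normal_cube_closed_subset = group G for G (structure) +
  fixes S :: "'a set"
  assumes finite_carrier: "finite (carrier G)"
    and subset: "S \<subseteq> carrier G"
    and conj_mem_iff: "g \<in> carrier G \<Longrightarrow> w \<in> carrier G \<Longrightarrow> g \<otimes> w \<otimes> inv g \<in> S \<longleftrightarrow> w \<in> S"
    and inv_mem_iff: "w \<in> carrier G \<Longrightarrow> inv w \<in> S \<longleftrightarrow> w \<in> S"
    and cube_mem_iff: "x \<in> carrier G \<Longrightarrow> x \<otimes> x \<otimes> x \<in> S \<longleftrightarrow> x \<in> S"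
begin

lemma rotate_mem_iff:
  assumes "x \<in> carrier G" "y \<in> carrier G" "w \<in> carrier G"
  shows "y \<otimes> w \<otimes> x \<in> S \<longleftrightarrow> x \<otimes> y \<otimes> w \<in> S"
  using conj_mem_iff[of "inv x" "x \<otimes> y \<otimes> w"] assms by (simp add: m_assoc)

lemma sum_cube_eq_cube_sum:
  fixes z :: "'a \<Rightarrow> 'c::field"
  assumes char3: "(3::'c) = 0"
  shows "(\<Sum>a\<in>S. (z \<otimes>\<^bsub>group_algebra G\<^esub> z \<otimes>\<^bsub>group_algebra G\<^esub> z) a) = (\<Sum>a\<in>S. z a) ^ 3"
proof -
  let ?C = "carrier G"
  define F where "F = (\<lambda>(x, y, w). if x \<otimes> y \<otimes> w \<in> S then z x * z y * z w else 0)"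
  define \<rho> :: "'a \<times> 'a \<times> 'a \<Rightarrow> 'a \<times> 'a \<times> 'a" where "\<rho> = (\<lambda>(x, y, w). (y, w, x))"
  let ?D = "?C \<times> ?C \<times> ?C" and ?\<Delta> = "(\<lambda>x. (x, x, x)) ` ?C"
  have \<Delta>: "?\<Delta> \<subseteq> ?D" by auto
  have "(\<Sum>a\<in>S. (z \<otimes>\<^bsub>group_algebra G\<^esub> z \<otimes>\<^bsub>group_algebra G\<^esub> z) a) = sum F ?D"
    unfolding sum_mult_mult_group_algebra[OF finite_carrier subset] F_def
    by (simp add: sum.cartesian_product)
  also have "\<dots> = sum F (?D - ?\<Delta>) + sum F ?\<Delta>"
    using finite_carrier \<Delta> by (simp add: sum.subset_diff)
  also have "sum F (?D - ?\<Delta>) = 0"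
  proof (rule sum_eq_0_if_fixpoint_free_order_3[where \<rho> = \<rho>])
    fix u assume "u \<in> ?D - ?\<Delta>"
    then obtain x y w where u: "u = (x, y, w)" "x \<in> ?C" "y \<in> ?C" "w \<in> ?C" "\<not> (x = y \<and> y = w)"
      by (cases u) auto
    then show "\<rho> u \<in> ?D - ?\<Delta>" "\<rho> (\<rho> (\<rho> u)) = u" "\<rho> u \<noteq> u"
      unfolding \<rho>_def by auto
    show "F (\<rho> u) = F u"
      using u rotate_mem_iff[of x y w] unfolding F_def \<rho>_def by (simp add: ac_simps)
  qed (use finite_carrier char3 in auto)
  also have "sum F ?\<Delta> = (\<Sum>x\<in>?C. if x \<in> S then z x ^ 3 else 0)"
    by (subst sum.reindex) (auto simp: inj_on_def F_def cube_mem_iff power3_eq_cube intro!: sum.cong)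
  also have "\<dots> = (\<Sum>x\<in>S. z x ^ 3)"
    using finite_carrier subset by (simp add: sum.inter_restrict[symmetric] Int_absorb1)
  also have "\<dots> = (\<Sum>a\<in>S. z a) ^ 3"
    using char3 by (simp add: sum_power_3_char_3)
  finally show ?thesis by simp
qed

lemma sum_eq_0_if_nilpotent:
  fixes z :: "'a \<Rightarrow> 'c::field"
  assumes char3: "(3::'c) = 0" and z: "z \<in> carrier (group_algebra G)"
    and nil: "z [^]\<^bsub>group_algebra G\<^esub> (n::nat) = \<zero>\<^bsub>group_algebra G\<^esub>"
  shows "(\<Sum>a\<in>S. z a) = 0"
proof -
  interpret A: ring "group_algebra G :: ('a \<Rightarrow> 'c) ring"
    by (rule ring_group_algebra[OF finite_carrier])
  have pow: "(\<Sum>a\<in>S. (z [^]\<^bsub>group_algebra G\<^esub> ((3::nat) ^ k)) a) = (\<Sum>a\<in>S. z a) ^ (3 ^ k)" for k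
  proof (induction k)
    case (Suc k)
    let ?w = "z [^]\<^bsub>group_algebra G\<^esub> ((3::nat) ^ k)"
    have "z [^]\<^bsub>group_algebra G\<^esub> ((3::nat) ^ Suc k) = ?w [^]\<^bsub>group_algebra G\<^esub> (3::nat)"
      using z by (simp add: A.nat_pow_pow mult.commute)
    also have "\<dots> = ?w \<otimes>\<^bsub>group_algebra G\<^esub> ?w \<otimes>\<^bsub>group_algebra G\<^esub> ?w"
      using z by (simp add: numeral_3_eq_3)
    finally have "z [^]\<^bsub>group_algebra G\<^esub> ((3::nat) ^ Suc k)
        = ?w \<otimes>\<^bsub>group_algebra G\<^esub> ?w \<otimes>\<^bsub>group_algebra G\<^esub> ?w" .
    then show ?case
      using Suc char3 by (simp add: sum_cube_eq_cube_sum power_mult[symmetric] mult.commute)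
  qed (use z in simp)
  have "z [^]\<^bsub>group_algebra G\<^esub> ((3::nat) ^ n)
      = z [^]\<^bsub>group_algebra G\<^esub> ((3::nat) ^ n - n) \<otimes>\<^bsub>group_algebra G\<^esub> z [^]\<^bsub>group_algebra G\<^esub> n"
    using z less_exp[of n] by (simp add: A.nat_pow_mult)
  then have "z [^]\<^bsub>group_algebra G\<^esub> ((3::nat) ^ n) = \<zero>\<^bsub>group_algebra G\<^esub>"
    using z nil by simp
  then have "(\<Sum>a\<in>S. z a) ^ (3 ^ n) = 0" using pow[of n] by (simp add: zero_group_algebra)
  then show ?thesis by simp
qed

lemma mult_indicator_group_algebra:
  fixes \<alpha> :: "'a \<Rightarrow> 'c::field"
  assumes g: "g \<in> carrier G"
  shows "(\<alpha> \<otimes>\<^bsub>group_algebra G\<^esub> (\<lambda>x. if x \<in> S then 1 else 0)) g = (\<Sum>w\<in>S. \<alpha> (g \<otimes> w))"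
    and "((\<lambda>x. if x \<in> S then 1 else 0) \<otimes>\<^bsub>group_algebra G\<^esub> \<alpha>) g = (\<Sum>w\<in>S. \<alpha> (g \<otimes> w))"
proof -
  have restrict: "(\<Sum>w\<in>carrier G. if w \<in> S then \<alpha> (g \<otimes> w) else 0) = (\<Sum>w\<in>S. \<alpha> (g \<otimes> w))"
    using finite_carrier subset by (simp add: sum.inter_restrict[symmetric] Int_absorb1)
  have "inv p \<otimes> g \<in> S \<longleftrightarrow> inv g \<otimes> p \<in> S" if "p \<in> carrier G" for p
    using inv_mem_iff[of "inv g \<otimes> p"] g that by (simp add: inv_mult_group)
  then have "(\<Sum>p\<in>carrier G. \<alpha> p * (if inv p \<otimes> g \<in> S then 1 else 0))
      = (\<Sum>w\<in>carrier G. if w \<in> S then \<alpha> (g \<otimes> w) else 0)"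
    by (intro sum.reindex_bij_witness[where i = "\<lambda>w. g \<otimes> w" and j = "\<lambda>p. inv g \<otimes> p"])
      (use g in \<open>auto simp: inv_mult_group m_assoc inv_mem_iff\<close>)
  then show "(\<alpha> \<otimes>\<^bsub>group_algebra G\<^esub> (\<lambda>x. if x \<in> S then 1 else 0)) g = (\<Sum>w\<in>S. \<alpha> (g \<otimes> w))"
    using g restrict by (simp add: mult_group_algebra)
  have "inv g \<otimes> (inv p \<otimes> g) \<in> S \<longleftrightarrow> p \<in> S" if "p \<in> carrier G" for p
    using conj_mem_iff[of "inv g" "inv p"] inv_mem_iff[of p] g that by (simp add: m_assoc)
  then have "(\<Sum>p\<in>carrier G. (if p \<in> S then 1 else 0) * \<alpha> (inv p \<otimes> g))
      = (\<Sum>w\<in>carrier G. if w \<in> S then \<alpha> (g \<otimes> w) else 0)"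
    by (intro sum.reindex_bij_witness[where i = "\<lambda>w. g \<otimes> inv w \<otimes> inv g"
          and j = "\<lambda>p. inv g \<otimes> inv p \<otimes> g"])
      (use g in \<open>auto simp: inv_mult_group m_assoc conj_mem_iff inv_mem_iff\<close>)
  then show "((\<lambda>x. if x \<in> S then 1 else 0) \<otimes>\<^bsub>group_algebra G\<^esub> \<alpha>) g = (\<Sum>w\<in>S. \<alpha> (g \<otimes> w))"
    using g restrict by (simp add: mult_group_algebra)
qed

lemma jacobson_radical_annihilates_indicator:
  fixes \<alpha> :: "'a \<Rightarrow> 'c::{finite,field}"
  assumes char3: "(3::'c) = 0" and J: "\<alpha> \<in> jacobson_radical (group_algebra G)"
  shows "\<alpha> \<otimes>\<^bsub>group_algebra G\<^esub> (\<lambda>x. if x \<in> S then 1 else 0) = \<zero>\<^bsub>group_algebra G\<^esub>"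
    and "(\<lambda>x. if x \<in> S then 1 else 0) \<otimes>\<^bsub>group_algebra G\<^esub> \<alpha> = \<zero>\<^bsub>group_algebra G\<^esub>"
proof -
  interpret A: ring "group_algebra G :: ('a \<Rightarrow> 'c) ring"
    by (rule ring_group_algebra[OF finite_carrier])
  have "(\<Sum>w\<in>S. \<alpha> (g \<otimes> w)) = 0" if g: "g \<in> carrier G" for g
  proof -
    let ?\<delta> = "\<lambda>x. if x = inv g then 1 else (0::'c)"
    have "?\<delta> \<in> carrier (group_algebra G)" using g by (simp add: carrier_group_algebra)
    then have \<delta>\<alpha>: "?\<delta> \<otimes>\<^bsub>group_algebra G\<^esub> \<alpha> \<in> jacobson_radical (group_algebra G)"
      using J by (intro A.jacobson_radical_mult_left)
    then obtain n :: nat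
      where "(?\<delta> \<otimes>\<^bsub>group_algebra G\<^esub> \<alpha>) [^]\<^bsub>group_algebra G\<^esub> n = \<zero>\<^bsub>group_algebra G\<^esub>"
      using A.jacobson_radical_nilpotent[OF finite_carrier_group_algebra[OF finite_carrier]] by blast
    then have "(\<Sum>w\<in>S. (?\<delta> \<otimes>\<^bsub>group_algebra G\<^esub> \<alpha>) w) = 0"
      using char3 jacobson_radical_carrier[OF \<delta>\<alpha>] by (intro sum_eq_0_if_nilpotent)
    moreover have "(?\<delta> \<otimes>\<^bsub>group_algebra G\<^esub> \<alpha>) w = \<alpha> (g \<otimes> w)" if "w \<in> S" for w
      using that subset g finite_carrier by (subst delta_mult_group_algebra) auto
    ultimately show ?thesis by simp
  qed
  then show "\<alpha> \<otimes>\<^bsub>group_algebra G\<^esub> (\<lambda>x. if x \<in> S then 1 else 0) = \<zero>\<^bsub>group_algebra G\<^esub>"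
    and "(\<lambda>x. if x \<in> S then 1 else 0) \<otimes>\<^bsub>group_algebra G\<^esub> \<alpha> = \<zero>\<^bsub>group_algebra G\<^esub>"
    by (simp_all add: mult_group_algebra_eq_zeroI mult_indicator_group_algebra)
qed

end

section \<open>The group \<open>T\<^sub>3\<^sub>m\<close>\<close>

lemma carrier_T_grp: "carrier (T_grp m t) = {0..<m} \<times> {0..<3}"
  by (simp add: T_grp_def)

lemma mult_T_grp:
  "(a, b) \<otimes>\<^bsub>T_grp m t\<^esub> (c, d) = ((a + c * t ^ (2 * nat b)) mod m, (b + d) mod 3)"
  by (simp add: T_grp_def)

lemma one_T_grp: "\<one>\<^bsub>T_grp m t\<^esub> = (0, 0)"
  by (simp add: T_grp_def)

lemma power_mod_eq_power_mod_3:
  fixes m t :: int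
  assumes "t ^ 3 mod m = 1 mod m"
  shows "t ^ n mod m = t ^ (n mod 3) mod m"
proof -
  have "(t ^ 3) ^ (n div 3) mod m = 1 mod m"
    using assms by (metis power_mod power_one)
  then have "((t ^ 3) ^ (n div 3) * t ^ (n mod 3)) mod m = (1 * t ^ (n mod 3)) mod m"
    by (intro mod_mult_cong refl)
  moreover have "t ^ n = (t ^ 3) ^ (n div 3) * t ^ (n mod 3)"
    by (simp flip: power_mult power_add)
  ultimately show ?thesis by simp
qed

lemma group_T_grp:
  fixes m t :: int
  assumes m: "m > 0" and t3: "t ^ 3 mod m = 1 mod m"
  shows "group (T_grp m t)"
proof (rule groupI)
  fix x y z assume "x \<in> carrier (T_grp m t)" "y \<in> carrier (T_grp m t)" "z \<in> carrier (T_grp m t)"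
  then obtain a b c d f h where xyz: "x = (a, b)" "y = (c, d)" "z = (f, h)"
    and bd: "0 \<le> b" "b < 3" "0 \<le> d" "d < 3"
    by (auto simp: carrier_T_grp)
  let ?e = "\<lambda>b. t ^ (2 * nat b)"
  have "(2 * nat ((b + d) mod 3)) mod 3 = (2 * nat b + 2 * nat d) mod 3"
    using bd by (simp add: nat_mod_distrib nat_add_distrib mod_mult_right_eq distrib_left)
  then have e: "?e ((b + d) mod 3) mod m = (?e b * ?e d) mod m"
    using power_mod_eq_power_mod_3[OF t3] by (metis power_add add_mult_distrib2)
  have "((a + c * ?e b) mod m + f * ?e ((b + d) mod 3)) mod m
      = (a + c * ?e b + f * ?e ((b + d) mod 3)) mod m"
    by (simp add: mod_simps)
  also have "\<dots> = (a + c * ?e b + f * (?e b * ?e d)) mod m"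
    using e by (intro mod_add_cong mod_mult_cong refl)
  also have "\<dots> = (a + (c + f * ?e d) * ?e b) mod m"
    by (simp add: algebra_simps)
  also have "\<dots> = (a + (c + f * ?e d) mod m * ?e b) mod m"
    by (intro mod_add_cong mod_mult_cong refl) simp
  finally show "x \<otimes>\<^bsub>T_grp m t\<^esub> y \<otimes>\<^bsub>T_grp m t\<^esub> z = x \<otimes>\<^bsub>T_grp m t\<^esub> (y \<otimes>\<^bsub>T_grp m t\<^esub> z)"
    unfolding xyz by (simp add: mult_T_grp mod_simps add.assoc)
next
  fix x assume "x \<in> carrier (T_grp m t)"
  then obtain c d where x: "x = (c, d)" by (cases x)
  define b where "b = (3 - d) mod 3"
  have "((- c * t ^ (2 * nat b)) mod m, b) \<in> carrier (T_grp m t)"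
    "((- c * t ^ (2 * nat b)) mod m, b) \<otimes>\<^bsub>T_grp m t\<^esub> x = \<one>\<^bsub>T_grp m t\<^esub>"
    using m unfolding x b_def by (simp_all add: carrier_T_grp mult_T_grp one_T_grp mod_simps)
  then show "\<exists>y\<in>carrier (T_grp m t). y \<otimes>\<^bsub>T_grp m t\<^esub> x = \<one>\<^bsub>T_grp m t\<^esub>" by blast
qed (use m in \<open>auto simp: carrier_T_grp mult_T_grp one_T_grp\<close>)

locale T3m =
  fixes k :: nat and m t :: int
  assumes m_eq: "m = 3 * int k + 1"
    and t_cube: "t ^ 3 mod m = 1 mod m"
    and gcd_m_t: "gcd m (t - 1) = 1"
begin

lemma m_pos: "m > 0"
  using m_eq by simp

lemma coprime_m_3: "coprime m 3"
  using coprime_mod_left_iff[of 3 m] m_eq by simp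

lemma m_dvd_1_t2_t4: "m dvd 1 + t ^ 2 + t ^ 4"
proof -
  have "t ^ 3 - 1 = (t ^ 2 + t + 1) * (t - 1)"
    by (simp add: algebra_simps power2_eq_square power3_eq_cube)
  moreover have "m dvd t ^ 3 - 1" using t_cube by (simp add: mod_eq_dvd_iff)
  ultimately have "m dvd t ^ 2 + t + 1"
    using gcd_m_t by (simp add: coprime_dvd_mult_left_iff coprime_iff_gcd_eq_1)
  moreover have "1 + t ^ 2 + t ^ 4 = (t ^ 2 + t + 1) * (1 - t + t ^ 2)"
    by (simp add: algebra_simps power2_eq_square power4_eq_xxxx)
  ultimately show ?thesis by simp
qed

lemma pow_x_power: "(a, 0) [^]\<^bsub>T_grp m t\<^esub> (n::nat) = ((int n * a) mod m, 0)"
  by (induction n) (simp_all add: one_T_grp mult_T_grp mod_simps algebra_simps)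

lemma x_power_eq_0_if_pow_eq_one:
  assumes "(a, 0) \<in> carrier (T_grp m t)" "coprime (int n) m"
    and "(a, 0) [^]\<^bsub>T_grp m t\<^esub> n = \<one>\<^bsub>T_grp m t\<^esub>"
  shows "a = 0"
proof -
  have "m dvd int n * a" using assms(3) by (simp add: pow_x_power one_T_grp dvd_eq_mod_eq_0)
  then have "m dvd a" using assms(2) by (simp add: coprime_commute coprime_dvd_mult_right_iff)
  moreover have "0 \<le> a" "a < m" using assms(1) by (auto simp: carrier_T_grp)
  ultimately show ?thesis by (cases "a > 0") (auto dest: zdvd_imp_le)
qed

lemma cube_eq_one_if_snd_ne_0:
  assumes g: "(a, b) \<in> carrier (T_grp m t)" and b: "b \<noteq> 0"
  shows "(a, b) [^]\<^bsub>T_grp m t\<^esub> (3::nat) = \<one>\<^bsub>T_grp m t\<^esub>"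
proof -
  have "0 \<le> a" "a < m" "b = 1 \<or> b = 2" using g b by (auto simp: carrier_T_grp)
  then have "(a, b) [^]\<^bsub>T_grp m t\<^esub> (3::nat) = ((a * (1 + t ^ 2 + t ^ 4)) mod m, 0)"
    by (auto simp: numeral_3_eq_3 one_T_grp mult_T_grp mod_simps algebra_simps power2_eq_square)
  then show ?thesis using m_dvd_1_t2_t4 by (simp add: one_T_grp)
qed

lemma mem_cube_roots_iff:
  assumes g: "g \<in> carrier (T_grp m t)"
  shows "g \<in> cube_roots (T_grp m t) \<longleftrightarrow> g = (0, 0) \<or> snd g \<noteq> 0"
proof -
  obtain a b where gab: "g = (a, b)" by (cases g)
  show ?thesis
  proof (cases "b = 0")
    case True
    have cop: "coprime (int 3) m" using coprime_m_3 by (simp add: coprime_commute)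
    have "(a, 0) [^]\<^bsub>T_grp m t\<^esub> (3::nat) = \<one>\<^bsub>T_grp m t\<^esub> \<longleftrightarrow> a = 0"
    proof
      assume "(a, 0) [^]\<^bsub>T_grp m t\<^esub> (3::nat) = \<one>\<^bsub>T_grp m t\<^esub>"
      with g cop show "a = 0" unfolding gab True by (rule x_power_eq_0_if_pow_eq_one)
    qed (simp add: pow_x_power one_T_grp)
    then show ?thesis using g unfolding cube_roots_def gab True by simp
  next
    case False
    then show ?thesis using g cube_eq_one_if_snd_ne_0 unfolding cube_roots_def gab by simp
  qed
qed

lemma cube_eq_one_if_pow_9_eq_one:
  assumes g: "g \<in> carrier (T_grp m t)" and g9: "g [^]\<^bsub>T_grp m t\<^esub> (9::nat) = \<one>\<^bsub>T_grp m t\<^esub>"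
  shows "g [^]\<^bsub>T_grp m t\<^esub> (3::nat) = \<one>\<^bsub>T_grp m t\<^esub>"
proof -
  obtain a b where gab: "g = (a, b)" by (cases g)
  show ?thesis
  proof (cases "b = 0")
    case True
    have "coprime (int 9) m"
      using coprime_m_3 coprime_power_right_iff[of m 3 2] by (simp add: coprime_commute)
    with g g9 have "a = 0" unfolding gab True by (intro x_power_eq_0_if_pow_eq_one)
    then show ?thesis unfolding gab True by (simp add: pow_x_power one_T_grp)
  next
    case False
    then show ?thesis using g cube_eq_one_if_snd_ne_0 unfolding gab by simp
  qed
qed

sublocale T: normal_cube_closed_subset "T_grp m t" "cube_roots (T_grp m t)"
proof -
  interpret group "T_grp m t" using m_pos t_cube by (rule group_T_grp)
  have "finite (carrier (T_grp m t))" by (simp add: carrier_T_grp)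
  then show "normal_cube_closed_subset (T_grp m t) (cube_roots (T_grp m t))"
    by unfold_locales (simp_all add: conj_mem_cube_roots_iff inv_mem_cube_roots_iff
        cube_mem_cube_roots_iff[OF cube_eq_one_if_pow_9_eq_one] cube_roots_subset)
qed

lemma power_of_3_order_iff_mem_cube_roots:
  "g \<in> carrier (T_grp m t) \<and> (\<exists>n::nat. group.ord (T_grp m t) g = 3 ^ n) \<longleftrightarrow> g \<in> cube_roots (T_grp m t)"
  using T.ord_eq_power_of_3_iff[OF cube_eq_one_if_pow_9_eq_one, of g] cube_roots_subset[of "T_grp m t"]
  by blast

lemma snd_mult:
  "x \<in> carrier (T_grp m t) \<Longrightarrow> y \<in> carrier (T_grp m t) \<Longrightarrow>
    snd (x \<otimes>\<^bsub>T_grp m t\<^esub> y) = (snd x + snd y) mod 3"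
  by (cases x, cases y) (simp add: mult_T_grp)

lemma snd_inv_mult:
  assumes p: "p \<in> carrier (T_grp m t)" and g: "g \<in> carrier (T_grp m t)"
  shows "snd (inv\<^bsub>T_grp m t\<^esub> p \<otimes>\<^bsub>T_grp m t\<^esub> g) = (snd g - snd p) mod 3"
proof -
  have "(snd (inv\<^bsub>T_grp m t\<^esub> p) + snd p) mod 3 = 0"
    using snd_mult[of "inv\<^bsub>T_grp m t\<^esub> p" p] p by (simp add: one_T_grp)
  moreover have "0 \<le> snd (inv\<^bsub>T_grp m t\<^esub> p)" "snd (inv\<^bsub>T_grp m t\<^esub> p) < 3"
    using p T.inv_closed[OF p] by (auto simp: carrier_T_grp)
  ultimately have "snd (inv\<^bsub>T_grp m t\<^esub> p) = (- snd p) mod 3" by presburger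
  then show ?thesis using snd_mult[of "inv\<^bsub>T_grp m t\<^esub> p" g] p g by (simp add: mod_simps)
qed

lemma inv_mult_mem_cube_roots_iff:
  assumes p: "p \<in> carrier (T_grp m t)" and g: "g \<in> carrier (T_grp m t)"
  shows "inv\<^bsub>T_grp m t\<^esub> p \<otimes>\<^bsub>T_grp m t\<^esub> g \<in> cube_roots (T_grp m t) \<longleftrightarrow> p = g \<or> snd p \<noteq> snd g"
proof -
  have "inv\<^bsub>T_grp m t\<^esub> p \<otimes>\<^bsub>T_grp m t\<^esub> g = \<one>\<^bsub>T_grp m t\<^esub> \<longleftrightarrow> p = g"
    using p g T.inv_solve_left'[OF T.one_closed p g] by auto
  then have "inv\<^bsub>T_grp m t\<^esub> p \<otimes>\<^bsub>T_grp m t\<^esub> g = (0, 0) \<longleftrightarrow> p = g"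
    by (simp add: one_T_grp)
  moreover have "(snd g - snd p) mod 3 \<noteq> 0 \<longleftrightarrow> snd p \<noteq> snd g"
    using p g by (auto simp: carrier_T_grp) presburger+
  ultimately show ?thesis using p g by (simp add: mem_cube_roots_iff snd_inv_mult)
qed

lemma sum_carrier_snd:
  "(\<Sum>p\<in>carrier (T_grp m t). f (snd p)) = of_int m * (\<Sum>i\<in>{0..<3}. f i)"
proof -
  have "(\<Sum>p\<in>carrier (T_grp m t). f (snd p)) = (\<Sum>a\<in>{0..<m}. \<Sum>i\<in>{0..<3::int}. f i)"
    unfolding carrier_T_grp sum.cartesian_product by (simp add: case_prod_beta')
  then show ?thesis using m_pos by simp
qed

end

section \<open>Elements annihilated by \<open>s\<close>\<close>

text \<open>Multiplication in the group algebra of Z/3, with residues represented by 0, 1, 2.\<close>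

definition cyclic_conv3 :: "(int \<Rightarrow> 'a::comm_ring_1) \<Rightarrow> (int \<Rightarrow> 'a) \<Rightarrow> int \<Rightarrow> 'a" where
  "cyclic_conv3 c d j = (\<Sum>i\<in>{0..<3}. c i * d ((j - i) mod 3))"

lemma sum_atLeastLessThan_3: "(\<Sum>i\<in>{0..<3::int}. f i) = f 0 + f 1 + f 2"
proof -
  have "{0..<3::int} = {0, 1, 2}" by auto
  then show ?thesis by (simp add: add.assoc)
qed

lemma cyclic_conv3_cube_eq_0:
  fixes c :: "int \<Rightarrow> 'a::comm_ring_1"
  assumes char3: "(3::'a) = 0" and c_sum: "c 0 + c 1 + c 2 = 0" and j: "j \<in> {0..<3}"
  shows "cyclic_conv3 (cyclic_conv3 c c) c j = 0"
proof -
  have c0: "c 0 = - c 1 - c 2" using c_sum by (simp add: algebra_simps eq_neg_iff_add_eq_0)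
  have "j = 0 \<or> j = 1 \<or> j = 2" using j by auto
  then have "cyclic_conv3 (cyclic_conv3 c c) c j = 3 * (if j = 0 then 3 * c 0 * c 1 * c 2
      else if j = 1 then c 0 * c 0 * c 1 + c 1 * c 1 * c 2 + c 2 * c 2 * c 0
      else c 0 * c 0 * c 2 + c 1 * c 1 * c 0 + c 2 * c 2 * c 1)"
    by (elim disjE) (simp_all add: cyclic_conv3_def sum_atLeastLessThan_3 c0 algebra_simps)
  then show ?thesis using char3 by simp
qed

context T3m
begin

lemma of_int_m_eq_1: "CHAR('a::ring_1) = 3 \<Longrightarrow> (of_int m :: 'a) = 1"
  using three_eq_0_if_CHAR_3[where 'a = 'a] m_eq by simp

lemma mult_group_algebra_snd:
  fixes \<beta> \<gamma> :: "int \<times> int \<Rightarrow> 'a::field"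
  assumes char3: "CHAR('a) = 3"
    and \<beta>: "\<And>p. p \<in> carrier (T_grp m t) \<Longrightarrow> \<beta> p = c (snd p)"
    and \<gamma>: "\<And>p. p \<in> carrier (T_grp m t) \<Longrightarrow> \<gamma> p = d (snd p)"
    and g: "g \<in> carrier (T_grp m t)"
  shows "(\<beta> \<otimes>\<^bsub>group_algebra (T_grp m t)\<^esub> \<gamma>) g = cyclic_conv3 c d (snd g)"
proof -
  have "(\<beta> \<otimes>\<^bsub>group_algebra (T_grp m t)\<^esub> \<gamma>) g
      = (\<Sum>p\<in>carrier (T_grp m t). c (snd p) * d ((snd g - snd p) mod 3))"
    using g by (simp add: mult_group_algebra \<beta> \<gamma> snd_inv_mult)
  also have "\<dots> = cyclic_conv3 c d (snd g)"
    using sum_carrier_snd[of "\<lambda>i. c i * d ((snd g - i) mod 3)"] of_int_m_eq_1[OF char3]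
    by (simp add: cyclic_conv3_def)
  finally show ?thesis .
qed

lemma mult_indicator_eq_0_imp_factors_through_snd:
  fixes \<beta> :: "int \<times> int \<Rightarrow> 'a::field"
  assumes char3: "CHAR('a) = 3"
    and \<beta>s: "\<beta> \<otimes>\<^bsub>group_algebra (T_grp m t)\<^esub> (\<lambda>x. if x \<in> cube_roots (T_grp m t) then 1 else 0)
      = \<zero>\<^bsub>group_algebra (T_grp m t)\<^esub>"
  obtains c where "\<And>p. p \<in> carrier (T_grp m t) \<Longrightarrow> \<beta> p = c (snd p)" "c 0 + c 1 + c 2 = 0"
proof -
  let ?C = "carrier (T_grp m t)"
  define c where "c j = - (\<Sum>p\<in>{p \<in> ?C. snd p \<noteq> j}. \<beta> p)" for j
  have \<beta>c: "\<beta> g = c (snd g)" if g: "g \<in> ?C" for g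
  proof -
    have "0 = (\<Sum>p\<in>?C. \<beta> p * (if p = g \<or> snd p \<noteq> snd g then 1 else 0))"
      using fun_cong[OF \<beta>s, of g] g
      by (simp add: mult_group_algebra zero_group_algebra inv_mult_mem_cube_roots_iff cong: sum.cong_simp)
    also have "\<dots> = (\<Sum>p\<in>?C. if p = g \<or> snd p \<noteq> snd g then \<beta> p else 0)"
      by (intro sum.cong) auto
    also have "\<dots> = \<beta> g + (\<Sum>p\<in>{p \<in> ?C. snd p \<noteq> snd g}. \<beta> p)"
    proof -
      have "{p \<in> ?C. p = g \<or> snd p \<noteq> snd g} = insert g {p \<in> ?C. snd p \<noteq> snd g}" using g by auto
      then show ?thesis using T.finite_carrier by (simp add: sum.inter_filter[symmetric])
    qed
    finally show ?thesis unfolding c_def by (simp add: eq_neg_iff_add_eq_0)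
  qed
  have "c 0 = - (\<Sum>p\<in>?C. if snd p \<noteq> 0 then c (snd p) else 0)"
    unfolding c_def[of 0] using T.finite_carrier by (simp add: sum.inter_filter \<beta>c)
  also have "\<dots> = - (c 1 + c 2)"
    using sum_carrier_snd[of "\<lambda>i. if i \<noteq> 0 then c i else 0"] of_int_m_eq_1[OF char3]
    by (simp add: sum_atLeastLessThan_3)
  finally have "c 0 + c 1 + c 2 = 0" by simp
  with \<beta>c show ?thesis by (rule that)
qed

lemma cube_eq_0_if_mult_indicator_eq_0:
  fixes \<beta> :: "int \<times> int \<Rightarrow> 'a::field"
  assumes char3: "CHAR('a) = 3"
    and \<beta>s: "\<beta> \<otimes>\<^bsub>group_algebra (T_grp m t)\<^esub> (\<lambda>x. if x \<in> cube_roots (T_grp m t) then 1 else 0)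
      = \<zero>\<^bsub>group_algebra (T_grp m t)\<^esub>"
  shows "\<beta> \<otimes>\<^bsub>group_algebra (T_grp m t)\<^esub> \<beta> \<otimes>\<^bsub>group_algebra (T_grp m t)\<^esub> \<beta>
      = \<zero>\<^bsub>group_algebra (T_grp m t)\<^esub>"
proof (rule mult_group_algebra_eq_zeroI)
  obtain c where \<beta>: "\<And>p. p \<in> carrier (T_grp m t) \<Longrightarrow> \<beta> p = c (snd p)" and c_sum: "c 0 + c 1 + c 2 = 0"
    using mult_indicator_eq_0_imp_factors_through_snd[OF char3 \<beta>s] by blast
  fix g assume g: "g \<in> carrier (T_grp m t)"
  have "(\<beta> \<otimes>\<^bsub>group_algebra (T_grp m t)\<^esub> \<beta> \<otimes>\<^bsub>group_algebra (T_grp m t)\<^esub> \<beta>) g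
      = cyclic_conv3 (cyclic_conv3 c c) c (snd g)"
    using char3 \<beta> g by (intro mult_group_algebra_snd mult_group_algebra_snd)
  also have "\<dots> = 0"
    using three_eq_0_if_CHAR_3[OF char3] c_sum g by (intro cyclic_conv3_cube_eq_0) (auto simp: carrier_T_grp)
  finally show "(\<beta> \<otimes>\<^bsub>group_algebra (T_grp m t)\<^esub> \<beta> \<otimes>\<^bsub>group_algebra (T_grp m t)\<^esub> \<beta>) g = 0" .
qed

lemma mult_indicator_eq_0_imp_in_jacobson_radical:
  fixes \<alpha> :: "int \<times> int \<Rightarrow> 'a::field"
  assumes char3: "CHAR('a) = 3" and \<alpha>: "\<alpha> \<in> carrier (group_algebra (T_grp m t))"
    and \<alpha>s: "\<alpha> \<otimes>\<^bsub>group_algebra (T_grp m t)\<^esub> (\<lambda>x. if x \<in> cube_roots (T_grp m t) then 1 else 0)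
      = \<zero>\<^bsub>group_algebra (T_grp m t)\<^esub>"
  shows "\<alpha> \<in> jacobson_radical (group_algebra (T_grp m t))"
proof -
  interpret A: ring "group_algebra (T_grp m t) :: (int \<times> int \<Rightarrow> 'a) ring"
    by (rule T.ring_group_algebra[OF T.finite_carrier])
  let ?s = "\<lambda>x. if x \<in> cube_roots (T_grp m t) then 1 else (0::'a)"
  have s: "?s \<in> carrier (group_algebra (T_grp m t))"
    using cube_roots_subset[of "T_grp m t"] by (auto simp: carrier_group_algebra)
  show ?thesis
  proof (rule A.in_jacobson_radicalI[OF \<alpha>])
    fix r :: "int \<times> int \<Rightarrow> 'a" assume r: "r \<in> carrier (group_algebra (T_grp m t))"
    let ?\<beta> = "r \<otimes>\<^bsub>group_algebra (T_grp m t)\<^esub> \<alpha>"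
    have "?\<beta> \<otimes>\<^bsub>group_algebra (T_grp m t)\<^esub> ?s = \<zero>\<^bsub>group_algebra (T_grp m t)\<^esub>"
      using r \<alpha> s \<alpha>s by (simp add: A.m_assoc)
    then have "?\<beta> [^]\<^bsub>group_algebra (T_grp m t)\<^esub> (3::nat) = \<zero>\<^bsub>group_algebra (T_grp m t)\<^esub>"
      using cube_eq_0_if_mult_indicator_eq_0[OF char3] r \<alpha> by (simp add: numeral_3_eq_3)
    then show "\<exists>n::nat. ?\<beta> [^]\<^bsub>group_algebra (T_grp m t)\<^esub> n = \<zero>\<^bsub>group_algebra (T_grp m t)\<^esub>" ..
  qed
qed

end

theorem corollary3p5:
  fixes k :: nat and m t :: int and s :: "int \<times> int \<Rightarrow> 'a::{finite,field}"
  assumes "CHAR('a) = 3"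
    and "m = 3 * int k + 1"
    and "t ^ 3 mod m = 1 mod m"
    and "gcd m (t - 1) = 1"
    and "s = (\<lambda>g. if g \<in> carrier (T_grp m t) \<and> (\<exists>n::nat. group.ord (T_grp m t) g = 3 ^ n)
                   then 1 else 0)"
  shows "jacobson_radical (group_algebra (T_grp m t) :: (int \<times> int \<Rightarrow> 'a) ring)
       = {\<alpha> \<in> carrier (group_algebra (T_grp m t)).
            \<alpha> \<otimes>\<^bsub>group_algebra (T_grp m t)\<^esub> s = \<zero>\<^bsub>group_algebra (T_grp m t)\<^esub> \<and>
            s \<otimes>\<^bsub>group_algebra (T_grp m t)\<^esub> \<alpha> = \<zero>\<^bsub>group_algebra (T_grp m t)\<^esub>}"
proof -
  interpret T3m k m t using assms(2-4) by unfold_locales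
  have s: "s = (\<lambda>g. if g \<in> cube_roots (T_grp m t) then 1 else 0)"
    using assms(5) by (simp add: power_of_3_order_iff_mem_cube_roots)
  show ?thesis
  proof (intro equalityI subsetI CollectI conjI)
    fix \<alpha> :: "int \<times> int \<Rightarrow> 'a" assume J: "\<alpha> \<in> jacobson_radical (group_algebra (T_grp m t))"
    then show "\<alpha> \<in> carrier (group_algebra (T_grp m t))" by (rule jacobson_radical_carrier)
    show "\<alpha> \<otimes>\<^bsub>group_algebra (T_grp m t)\<^esub> s = \<zero>\<^bsub>group_algebra (T_grp m t)\<^esub>"
      "s \<otimes>\<^bsub>group_algebra (T_grp m t)\<^esub> \<alpha> = \<zero>\<^bsub>group_algebra (T_grp m t)\<^esub>"
      using T.jacobson_radical_annihilates_indicator[OF three_eq_0_if_CHAR_3[OF assms(1)] J] s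
      by simp_all
  next
    fix \<alpha> :: "int \<times> int \<Rightarrow> 'a"
    assume "\<alpha> \<in> {\<alpha> \<in> carrier (group_algebra (T_grp m t)).
        \<alpha> \<otimes>\<^bsub>group_algebra (T_grp m t)\<^esub> s = \<zero>\<^bsub>group_algebra (T_grp m t)\<^esub> \<and>
        s \<otimes>\<^bsub>group_algebra (T_grp m t)\<^esub> \<alpha> = \<zero>\<^bsub>group_algebra (T_grp m t)\<^esub>}"
    then show "\<alpha> \<in> jacobson_radical (group_algebra (T_grp m t))"
      using mult_indicator_eq_0_imp_in_jacobson_radical[OF assms(1)] s by simp
  qed
qed

end
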